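(* Let $d$ be a distance function on the edges of the complete graph $K_n$ and let $H$ be a Hamiltonian cycle of $K_n$. Then, with probability $\Omega(1)$ (as $n\to\infty$), one application of the edge-based random solution generation with the matrix $\Pi^H$ outputs a Hamiltonian cycle whose cost is not larger than the cost of $H$.
   Context: The cost of a Hamiltonian cycle is the sum of $d$ over its edges. For a Hamiltonian cycle $H$, $\Pi^H=(\pi_{i,j})$ is the symmetric $n\times n$ matrix with $\pi_{i,i}=0$, $\pi_{i,j}=1-\frac1n$ if $\{i,j\}\in H$ and $\pi_{i,j}=\frac{1}{n(n-2)}$ otherwise. Edge-based generation from $\Pi$: start with $B=\emptyset$ and repeatedly add to $B$ an edge $\{i,j\}\notin B$ chosen among the admissible edges with probability proportional to $\pi_{i,j}+\pi_{j,i}$, until $B$ is a Hamiltonian cycle; an edge is admissible if adding it to $B$ creates no vertex of degree $\ge3$ and no cycle with fewer than $n$ edges. *)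

theory Defs
  imports "HOL-Probability.Probability"
begin

definition Kn_edges :: "nat \<Rightarrow> nat set set" where
  "Kn_edges n = {e. e \<subseteq> {0..<n} \<and> card e = 2}"

definition cycle_edges :: "(nat \<Rightarrow> nat) \<Rightarrow> nat \<Rightarrow> nat set set" where
  "cycle_edges f k = {{f i, f ((i + 1) mod k)} | i. i < k}"

definition ham_cycle :: "nat \<Rightarrow> nat set set \<Rightarrow> bool" where
  "ham_cycle n H \<longleftrightarrow> n \<ge> 3 \<and>
     (\<exists>f. bij_betw f {0..<n} {0..<n} \<and> H = cycle_edges f n)"

definition has_cycle_len :: "nat \<Rightarrow> nat \<Rightarrow> nat set set \<Rightarrow> bool" where
  "has_cycle_len n k B \<longleftrightarrow> k \<ge> 3 \<and>
     (\<exists>f. inj_on f {0..<k} \<and> f ` {0..<k} \<subseteq> {0..<n} \<and> cycle_edges f k \<subseteq> B)"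

definition degree :: "nat set set \<Rightarrow> nat \<Rightarrow> nat" where
  "degree B v = card {e \<in> B. v \<in> e}"

definition admissible :: "nat \<Rightarrow> nat set set \<Rightarrow> nat set set" where
  "admissible n B = {e \<in> Kn_edges n. e \<notin> B \<and>
      (\<forall>v. degree (insert e B) v < 3) \<and>
      (\<forall>k<n. \<not> has_cycle_len n k (insert e B))}"

definition cost :: "(nat set \<Rightarrow> real) \<Rightarrow> nat set set \<Rightarrow> real" where
  "cost d H = (\<Sum>e\<in>H. d e)"

definition PiH :: "nat \<Rightarrow> nat set set \<Rightarrow> nat \<Rightarrow> nat \<Rightarrow> real" where
  "PiH n H i j = (if i = j then 0
                  else if {i, j} \<in> H then 1 - 1 / real n
                  else 1 / (real n * (real n - 2)))"

text \<open>Weight of edge {i,j}: pi i j + pi j i.\<close>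
definition edge_weight :: "(nat \<Rightarrow> nat \<Rightarrow> real) \<Rightarrow> nat set \<Rightarrow> real" where
  "edge_weight P e = (\<Sum>i\<in>e. \<Sum>j\<in>e - {i}. P i j)"

definition weighted_choice :: "'a set \<Rightarrow> ('a \<Rightarrow> real) \<Rightarrow> 'a pmf" where
  "weighted_choice A w = embed_pmf (\<lambda>x. if x \<in> A then w x / (\<Sum>y\<in>A. w y) else 0)"

fun gen_steps :: "nat \<Rightarrow> (nat \<Rightarrow> nat \<Rightarrow> real) \<Rightarrow> nat \<Rightarrow> nat set set \<Rightarrow> nat set set pmf" where
  "gen_steps n P 0 B = return_pmf B"
| "gen_steps n P (Suc k) B =
     (if ham_cycle n B \<or> admissible n B = {} then return_pmf B
      else bind_pmf (weighted_choice (admissible n B) (edge_weight P))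
                    (\<lambda>e. gen_steps n P k (insert e B)))"

text \<open>One run of the generation, starting from the empty set; n steps suffice since
  every step adds one edge and a Hamiltonian cycle has n edges.\<close>
definition edge_gen :: "nat \<Rightarrow> (nat \<Rightarrow> nat \<Rightarrow> real) \<Rightarrow> nat set set pmf" where
  "edge_gen n P = gen_steps n P n {}"

end

theory Submission
  imports Defs
begin

text \<open>We bound from below the probability that the generation outputs \<open>H\<close> itself.
  Enumerate \<open>H\<close> as a tour and let \<open>B \<subseteq> H\<close> be the current edge set, with \<open>m\<close> tour edges
  still missing. Every missing tour edge is admissible and has weight
  \<open>a = 2(1 - 1/n)\<close>. An admissible non-tour edge joins two vertices of degree at most one
  in \<open>B\<close>; these lie on the \<open>m\<close> missing tour edges, so there are at most \<open>4m\<^sup>2\<close> such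
  edges, each of weight \<open>b = a/((n-1)(n-2))\<close>. Hence the next edge is a tour edge with
  probability at least \<open>1/(1 + 4m/((n-1)(n-2))) \<ge> exp (-4m/((n-1)(n-2)))\<close>, and
  multiplying over \<open>m = n, \<dots>, 1\<close> gives \<open>exp (-2n(n+1)/((n-1)(n-2))) \<ge> exp (-4)\<close> for
  \<open>n \<ge> 7\<close>.\<close>

lemma pmf_weighted_choice:
  assumes "finite A" and "A \<noteq> {}" and "\<And>x. x \<in> A \<Longrightarrow> w x > (0::real)"
  shows "pmf (weighted_choice A w) x = (if x \<in> A then w x / sum w A else 0)"
proof -
  define f where "f = (\<lambda>x. if x \<in> A then w x / sum w A else 0)"
  have W: "sum w A > 0" using sum_pos assms by blast
  have f_nonneg: "\<And>x. 0 \<le> f x" unfolding f_def using assms(3) W by (auto intro: less_imp_le)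
  have "(\<integral>\<^sup>+x. ennreal (f x) \<partial>count_space UNIV) = (\<Sum>x\<in>A. ennreal (f x))"
    by (rule nn_integral_count_space') (auto simp: assms(1) f_def)
  also have "\<dots> = ennreal (\<Sum>x\<in>A. f x)" using f_nonneg by (simp add: sum_ennreal)
  also have "(\<Sum>x\<in>A. f x) = 1"
    using W by (simp add: f_def sum_divide_distrib[symmetric])
  finally show ?thesis
    using pmf_embed_pmf[of f] f_nonneg unfolding weighted_choice_def f_def by simp
qed

lemma set_pmf_weighted_choice:
  assumes "finite A" and "A \<noteq> {}" and "\<And>x. x \<in> A \<Longrightarrow> w x > (0::real)"
  shows "set_pmf (weighted_choice A w) \<subseteq> A"
  using pmf_weighted_choice[OF assms] by (auto simp: set_pmf_eq)

lemma pmf_bind_finite_support: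
  assumes "finite A" and "set_pmf p \<subseteq> A"
  shows "pmf (bind_pmf p f) x = (\<Sum>e\<in>A. pmf p e * pmf (f e) x)"
  unfolding pmf_bind using assms by (subst integral_measure_pmf[of A]) auto

lemma exp_neg_le_ratio:
  fixes x p q :: real
  assumes "0 \<le> x" and "0 < p" and "0 \<le> q" and "q \<le> x * p"
  shows "exp (- x) \<le> p / (p + q)"
proof -
  have "exp (- x) \<le> inverse (1 + x)"
    unfolding exp_minus using exp_ge_add_one_self[of x] assms(1) by (intro le_imp_inverse_le) auto
  also have "\<dots> \<le> p / (p + q)"
    using assms by (simp add: field_simps)
  finally show ?thesis .
qed

lemma edge_weight_doubleton: "a \<noteq> b \<Longrightarrow> edge_weight P {a, b} = P a b + P b a"
  unfolding edge_weight_def by (simp add: insert_Diff_if)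

lemma cycle_edges_memI: "i < k \<Longrightarrow> {f i, f (Suc i mod k)} \<in> cycle_edges f k"
  unfolding cycle_edges_def by auto

lemma degree_insert:
  assumes "finite B" and "e \<notin> B"
  shows "degree (insert e B) v = degree B v + (if v \<in> e then 1 else 0)"
proof -
  have "{x \<in> insert e B. v \<in> x} = (if v \<in> e then insert e {x \<in> B. v \<in> x} else {x \<in> B. v \<in> x})"
    by auto
  then show ?thesis unfolding degree_def using assms by simp
qed

lemma degree_mono: "finite C \<Longrightarrow> B \<subseteq> C \<Longrightarrow> degree B v \<le> degree C v"
  unfolding degree_def by (intro card_mono) auto

lemma Suc_mod_neq_self: "2 \<le> k \<Longrightarrow> j < k \<Longrightarrow> Suc j mod k \<noteq> j"
  by (simp add: mod_Suc)

lemma Suc_Suc_mod_neq_self: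
  assumes "3 \<le> k" and "j < k" shows "Suc (Suc j mod k) mod k \<noteq> j"
proof -
  consider "Suc (Suc j) < k" | "Suc (Suc j) = k" | "Suc (Suc j) = Suc k"
    using assms(2) by linarith
  then show ?thesis using assms(1) by cases (auto simp: mod_Suc_eq)
qed

lemma Suc_mod_inj: "i < k \<Longrightarrow> j < k \<Longrightarrow> Suc i mod k = Suc j mod k \<Longrightarrow> i = j"
  by (simp add: mod_Suc split: if_splits)

lemma Suc_mod_surj: "i < k \<Longrightarrow> \<exists>h<k. Suc h mod k = i"
  by (rule exI[of _ "if i = 0 then k - 1 else i - 1"]) auto

lemma finite_admissible: "finite (admissible n B)"
proof (rule finite_subset)
  show "admissible n B \<subseteq> Pow {0..<n}" by (auto simp: admissible_def Kn_edges_def)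
qed simp

lemma card_doubletons_le:
  assumes "finite D" shows "card {e. e \<subseteq> D \<and> card e = 2} \<le> card D ^ 2"
proof -
  have "card {e. e \<subseteq> D \<and> card e = 2} = card D choose 2" using n_subsets[OF assms] by simp
  also have "\<dots> \<le> card D ^ 2"
    by (cases "2 \<le> card D") (simp_all add: binomial_le_pow binomial_eq_0)
  finally show ?thesis .
qed

lemma edge_weight_PiH:
  assumes "e \<in> Kn_edges n"
  shows "edge_weight (PiH n H) e = (if e \<in> H then 2 * (1 - 1 / real n) else 2 / (real n * (real n - 2)))"
proof -
  obtain a b where e: "e = {a, b}" "a \<noteq> b" using assms unfolding Kn_edges_def card_2_iff by blast
  then have "{b, a} = e" by auto
  then show ?thesis using e edge_weight_doubleton[of a b] by (simp add: PiH_def)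
qed

lemma edge_weight_PiH_pos:
  assumes "3 \<le> n" and "e \<in> Kn_edges n" shows "edge_weight (PiH n H) e > 0"
proof -
  have "2 / real n < 2" using assms(1) by (simp add: divide_less_eq)
  then show ?thesis using assms by (simp add: edge_weight_PiH)
qed

lemma PiH_weights_ratio:
  assumes "3 \<le> n"
  shows "2 * (1 - 1 / real n) / ((real n - 1) * (real n - 2)) = 2 / (real n * (real n - 2))"
proof -
  have "real n \<noteq> 0" "real n - 1 \<noteq> 0" "real n - 2 \<noteq> 0" using assms by auto
  then show ?thesis by (simp add: divide_simps)
qed

locale ham_enumeration =
  fixes n :: nat and g :: "nat \<Rightarrow> nat"
  assumes n_ge_3: "n \<ge> 3" and bij_g: "bij_betw g {0..<n} {0..<n}"
begin

abbreviation tour :: "nat set set" where "tour \<equiv> cycle_edges g n"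

definition tour_edge :: "nat \<Rightarrow> nat set" where "tour_edge j = {g j, g (Suc j mod n)}"

definition pred_idx :: "nat \<Rightarrow> nat" where "pred_idx j = (if j = 0 then n - 1 else j - 1)"

lemma g_less: "j < n \<Longrightarrow> g j < n"
  using bij_g by (auto simp: bij_betw_def)

lemma g_surj: "v < n \<Longrightarrow> \<exists>j<n. v = g j"
  using bij_g by (force simp: bij_betw_def)

lemma g_eq_iff: "i < n \<Longrightarrow> j < n \<Longrightarrow> g i = g j \<longleftrightarrow> i = j"
  using bij_g by (auto simp: bij_betw_def dest: inj_onD)

lemma Suc_mod_less: "Suc j mod n < n"
  using n_ge_3 by simp

lemma pred_idx_less: "j < n \<Longrightarrow> pred_idx j < n"
  by (auto simp: pred_idx_def)

lemma Suc_pred_idx: "j < n \<Longrightarrow> Suc (pred_idx j) mod n = j"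
  using n_ge_3 by (auto simp: pred_idx_def)

lemma tour_eq_image: "tour = tour_edge ` {0..<n}"
  unfolding cycle_edges_def tour_edge_def atLeast0LessThan lessThan_def
  by (simp add: setcompr_eq_image)

lemma finite_tour: "finite tour"
  unfolding tour_eq_image by simp

lemma card_tour_edge:
  assumes "j < n" shows "card (tour_edge j) = 2"
proof -
  have "g j \<noteq> g (Suc j mod n)"
    using g_eq_iff[OF assms Suc_mod_less] Suc_mod_neq_self[OF _ assms] n_ge_3 by simp
  then show ?thesis unfolding tour_edge_def by simp
qed

lemma tour_edge_subset: "j < n \<Longrightarrow> tour_edge j \<subseteq> {0..<n}"
  unfolding tour_edge_def using g_less Suc_mod_less by auto

lemma tour_subset_Kn_edges: "tour \<subseteq> Kn_edges n"
  unfolding tour_eq_image Kn_edges_def using card_tour_edge tour_edge_subset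
  by (intro image_subsetI) auto

lemma inj_on_tour_edge: "inj_on tour_edge {0..<n}"
proof (rule inj_onI)
  fix i j assume i: "i \<in> {0..<n}" and j: "j \<in> {0..<n}" and eq: "tour_edge i = tour_edge j"
  have "i = j \<or> i = Suc j mod n" "Suc i mod n = j \<or> Suc i mod n = Suc j mod n"
    using eq i j g_eq_iff Suc_mod_less unfolding tour_edge_def by (auto simp: doubleton_eq_iff)
  then show "i = j"
    using i j n_ge_3 Suc_Suc_mod_neq_self[of n j] Suc_mod_inj[of i n j] by auto
qed

lemma card_tour: "card tour = n"
  unfolding tour_eq_image using card_image[OF inj_on_tour_edge] by simp

lemma tour_edge_in_tour: "j < n \<Longrightarrow> tour_edge j \<in> tour"
  unfolding tour_eq_image by auto

lemma tour_edge_pred_idx: "j < n \<Longrightarrow> tour_edge (pred_idx j) = {g (pred_idx j), g j}"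
  unfolding tour_edge_def using Suc_pred_idx by simp

lemma tour_edge_pred_idx_neq:
  assumes "j < n" shows "tour_edge j \<noteq> tour_edge (pred_idx j)"
proof
  assume "tour_edge j = tour_edge (pred_idx j)"
  then have "j = pred_idx j"
    using inj_on_tour_edge assms pred_idx_less[OF assms] by (auto dest: inj_onD)
  then show False
    using Suc_pred_idx[OF assms] Suc_mod_neq_self[OF _ assms] n_ge_3 by simp
qed

lemma tour_edges_at_vertex:
  assumes "e \<in> tour" and "j < n" and "g j \<in> e"
  shows "e = tour_edge j \<or> e = tour_edge (pred_idx j)"
proof -
  obtain i where i: "i < n" "e = tour_edge i" using assms(1) unfolding tour_eq_image by auto
  then have "j = i \<or> j = Suc i mod n"
    using assms(2,3) g_eq_iff Suc_mod_less unfolding tour_edge_def by auto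
  moreover have "pred_idx (Suc i mod n) = i"
    using i(1) n_ge_3 by (auto simp: pred_idx_def mod_Suc)
  ultimately show ?thesis using i by auto
qed

lemma degree_tour_le_2: "degree tour v \<le> 2"
proof (cases "v < n")
  case True
  then obtain j where j: "j < n" "v = g j" using g_surj by blast
  have "{e \<in> tour. v \<in> e} \<subseteq> {tour_edge j, tour_edge (pred_idx j)}"
    using tour_edges_at_vertex j by auto
  then have "degree tour v \<le> card {tour_edge j, tour_edge (pred_idx j)}"
    unfolding degree_def by (intro card_mono) auto
  also have "\<dots> \<le> 2" by (simp add: card_insert_le_m1)
  finally show ?thesis .
next
  case False
  then have no_edge: "{e \<in> tour. v \<in> e} = {}"
    using tour_edge_subset unfolding tour_eq_image by fastforce
  show ?thesis unfolding degree_def no_edge by simp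
qed

lemma subcycle_closed_under_tour_successor:
  assumes k: "3 \<le> k" and inj_f: "inj_on f {0..<k}" and sub: "cycle_edges f k \<subseteq> tour"
    and j: "j < n" and gj: "g j \<in> f ` {0..<k}"
  shows "g (Suc j mod n) \<in> f ` {0..<k}"
proof -
  obtain i where i: "i < k" "g j = f i" using gj by auto
  obtain h where h: "h < k" "Suc h mod k = i" using Suc_mod_surj[OF i(1)] by blast
  define i' where "i' = Suc i mod k"
  have i': "i' < k" "i' \<noteq> i" "i' \<noteq> h"
    unfolding i'_def using k i(1) h Suc_mod_neq_self[of k i] Suc_Suc_mod_neq_self[of k h] by auto
  have f_eq_iff: "a < k \<Longrightarrow> b < k \<Longrightarrow> f a = f b \<longleftrightarrow> a = b" for a b
    using inj_f by (auto dest: inj_onD)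
  have in_tour: "{f i, f i'} \<in> tour" "{f h, f i} \<in> tour"
    using sub cycle_edges_memI[OF i(1)] cycle_edges_memI[OF h(1)] h(2) unfolding i'_def by auto
  have "{f i, f i'} \<noteq> {f h, f i}"
    using f_eq_iff i' h(1) i(1) by (auto simp: doubleton_eq_iff)
  then have "tour_edge j \<in> {{f i, f i'}, {f h, f i}}"
    using tour_edges_at_vertex[OF in_tour(1) j] tour_edges_at_vertex[OF in_tour(2) j] i(2) by auto
  moreover have "g (Suc j mod n) \<in> tour_edge j" unfolding tour_edge_def by simp
  ultimately show ?thesis using i(1) i'(1) h(1) by auto
qed

lemma no_short_cycle_in_tour:
  assumes sub: "C \<subseteq> tour" and "k < n"
  shows "\<not> has_cycle_len n k C"
proof
  assume "has_cycle_len n k C"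
  then obtain f where k: "3 \<le> k" and inj_f: "inj_on f {0..<k}"
    and f_range: "f ` {0..<k} \<subseteq> {0..<n}" and f_sub: "cycle_edges f k \<subseteq> C"
    unfolding has_cycle_len_def by blast
  define S where "S = f ` {0..<k}"
  have "f 0 < n" using f_range k by (simp add: image_subset_iff)
  then obtain j0 where j0: "j0 < n" "g j0 = f 0" using g_surj by metis
  have orbit: "g ((j0 + t) mod n) \<in> S" for t
  proof (induction t)
    case 0
    then show ?case using j0 k unfolding S_def by auto
  next
    case (Suc t)
    then show ?case
      using subcycle_closed_under_tour_successor[OF k inj_f _ _, of "(j0 + t) mod n"] f_sub sub n_ge_3
      unfolding S_def by (simp add: mod_Suc_eq)
  qed
  have "{0..<n} \<subseteq> S"
  proof
    fix v assume "v \<in> {0..<n}"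
    then obtain j where j: "j < n" "v = g j" using g_surj by auto
    have "(j0 + (j + n - j0)) mod n = j" using j0 j by simp
    then show "v \<in> S" using orbit[of "j + n - j0"] j by simp
  qed
  then have "n \<le> card S" using card_mono[of S "{0..<n}"] unfolding S_def by simp
  also have "card S \<le> k" unfolding S_def using card_image_le[of "{0..<k}" f] by simp
  finally show False using \<open>k < n\<close> by simp
qed

lemma tour_minus_subset_admissible:
  assumes "B \<subseteq> tour" shows "tour - B \<subseteq> admissible n B"
proof
  fix e assume e: "e \<in> tour - B"
  then have sub: "insert e B \<subseteq> tour" using assms by auto
  have "degree (insert e B) v < 3" for v
    using degree_mono[OF finite_tour sub, of v] degree_tour_le_2[of v] by simp
  then show "e \<in> admissible n B"
    using e tour_subset_Kn_edges no_short_cycle_in_tour[OF sub] unfolding admissible_def by auto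
qed

lemma low_degree_vertex_on_missing_edge:
  assumes "B \<subseteq> tour" and "v < n" and "degree B v \<le> 1"
  shows "v \<in> \<Union>(tour - B)"
proof (rule ccontr)
  assume v: "v \<notin> \<Union>(tour - B)"
  obtain j where j: "j < n" "v = g j" using g_surj assms(2) by blast
  have "v \<in> tour_edge j" "v \<in> tour_edge (pred_idx j)"
    using j tour_edge_pred_idx by (auto simp: tour_edge_def)
  then have "{tour_edge j, tour_edge (pred_idx j)} \<subseteq> {e \<in> B. v \<in> e}"
    using v j(1) tour_edge_in_tour pred_idx_less by blast
  then have "card {tour_edge j, tour_edge (pred_idx j)} \<le> degree B v"
    unfolding degree_def using finite_subset[OF assms(1) finite_tour] by (intro card_mono) auto
  then show False using tour_edge_pred_idx_neq[OF j(1)] assms(3) by simp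
qed

text \<open>An admissible edge off the tour joins two vertices of degree at most one in \<open>B\<close>,
  and such vertices lie on the tour edges still missing from \<open>B\<close>.\<close>
lemma admissible_off_tour_subset:
  assumes "B \<subseteq> tour"
  shows "admissible n B - tour \<subseteq> {e. e \<subseteq> \<Union>(tour - B) \<and> card e = 2}"
proof
  fix e assume e: "e \<in> admissible n B - tour"
  have fin: "finite B" using finite_subset[OF assms finite_tour] .
  have eK: "e \<in> Kn_edges n" and eB: "e \<notin> B" and deg: "\<forall>v. degree (insert e B) v < 3"
    using e unfolding admissible_def by auto
  have "v \<in> \<Union>(tour - B)" if v: "v \<in> e" for v
  proof (rule low_degree_vertex_on_missing_edge[OF assms])
    show "v < n" using eK v unfolding Kn_edges_def by auto
    show "degree B v \<le> 1" using deg[rule_format, of v] degree_insert[OF fin eB, of v] v by simp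
  qed
  then show "e \<in> {e. e \<subseteq> \<Union>(tour - B) \<and> card e = 2}" using eK unfolding Kn_edges_def by auto
qed

lemma card_admissible_off_tour:
  assumes "B \<subseteq> tour"
  shows "card (admissible n B - tour) \<le> 4 * card (tour - B) ^ 2"
proof -
  define D where "D = \<Union>(tour - B)"
  have "D \<subseteq> {0..<n}" unfolding D_def using tour_subset_Kn_edges by (auto simp: Kn_edges_def)
  then have fin: "finite D" by (rule finite_subset) simp
  have "card (admissible n B - tour) \<le> card {e. e \<subseteq> D \<and> card e = 2}"
    using admissible_off_tour_subset[OF assms] fin unfolding D_def[symmetric]
    by (intro card_mono) auto
  also have "\<dots> \<le> card D ^ 2" using card_doubletons_le[OF fin] .
  also have "card D \<le> (\<Sum>e\<in>tour - B. card e)" unfolding D_def by (rule card_Union_le_sum_card)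
  also have "\<dots> = 2 * card (tour - B)"
    using tour_subset_Kn_edges by (simp add: Kn_edges_def subset_iff)
  finally show ?thesis by (simp add: power_mult_distrib)
qed

lemma sum_edge_weight_admissible:
  assumes "B \<subseteq> tour"
  shows "(\<Sum>e\<in>admissible n B. edge_weight (PiH n tour) e)
           = real (card (tour - B)) * (2 * (1 - 1 / real n))
             + real (card (admissible n B - tour)) * (2 / (real n * (real n - 2)))"
proof -
  let ?A = "admissible n B" and ?w = "edge_weight (PiH n tour)"
  have A_Kn: "?A \<subseteq> Kn_edges n" unfolding admissible_def by auto
  have A_split: "?A = (tour - B) \<union> (?A - tour)"
    using tour_minus_subset_admissible[OF assms] unfolding admissible_def by auto
  have "sum ?w ?A = sum ?w (tour - B) + sum ?w (?A - tour)"
    by (subst A_split, rule sum.union_disjoint) (use finite_admissible finite_tour in auto)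
  also have "sum ?w (tour - B) = real (card (tour - B)) * (2 * (1 - 1 / real n))"
    using tour_subset_Kn_edges by (simp add: edge_weight_PiH subset_iff)
  also have "sum ?w (?A - tour) = real (card (?A - tour)) * (2 / (real n * (real n - 2)))"
    using A_Kn by (simp add: edge_weight_PiH subset_iff)
  finally show ?thesis .
qed

lemma pmf_choose_tour_edge:
  assumes B: "B \<subseteq> tour" and e: "e \<in> tour - B"
  shows "exp (- (4 * real (card (tour - B)) / ((real n - 1) * (real n - 2)))) / real (card (tour - B))
           \<le> pmf (weighted_choice (admissible n B) (edge_weight (PiH n tour))) e"
proof -
  define m where "m = real (card (tour - B))"
  define c where "c = real (card (admissible n B - tour))"
  define a where "a = 2 * (1 - 1 / real n)"
  define b where "b = 2 / (real n * (real n - 2))"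
  define K where "K = (real n - 1) * (real n - 2)"
  have "pmf (weighted_choice (admissible n B) (edge_weight (PiH n tour))) e = a / (m * a + c * b)"
  proof -
    have e_A: "e \<in> admissible n B" using e tour_minus_subset_admissible[OF B] by auto
    have pos: "edge_weight (PiH n tour) x > 0" if "x \<in> admissible n B" for x
      using that n_ge_3 edge_weight_PiH_pos by (auto simp: admissible_def)
    have "edge_weight (PiH n tour) e = a"
      using e tour_subset_Kn_edges by (auto simp: edge_weight_PiH a_def)
    then show ?thesis
      using pmf_weighted_choice[of "admissible n B" "edge_weight (PiH n tour)" e,
              OF finite_admissible _ pos] e_A sum_edge_weight_admissible[OF B]
      unfolding a_def b_def m_def c_def by auto
  qed
  moreover have "exp (- (4 * m / K)) / m \<le> a / (m * a + c * b)"
  proof -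
    have n_real: "3 \<le> real n" using n_ge_3 by simp
    have a_pos: "0 < a" unfolding a_def using n_real by (simp add: divide_less_eq)
    have b_pos: "0 < b" unfolding b_def using n_real by simp
    have K_pos: "0 < K" unfolding K_def using n_real by simp
    have m_ge_1: "1 \<le> m" unfolding m_def using e finite_tour by (auto simp: Suc_le_eq card_gt_0_iff)
    have "c \<le> 4 * m\<^sup>2"
      using card_admissible_off_tour[OF B] unfolding c_def m_def by (simp flip: of_nat_power)
    then have "c * b \<le> 4 * m\<^sup>2 * b" using b_pos by (simp add: mult_right_mono)
    also have "\<dots> = 4 * m / K * (m * a)"
    proof -
      have "b = a / K" using PiH_weights_ratio[OF n_ge_3] unfolding a_def b_def K_def ..
      then show ?thesis by (simp add: power2_eq_square)
    qed
    finally have "exp (- (4 * m / K)) \<le> m * a / (m * a + c * b)"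
      using K_pos m_ge_1 a_pos b_pos by (intro exp_neg_le_ratio) (auto simp: c_def)
    then show ?thesis using m_ge_1 by (simp add: divide_le_eq mult.commute)
  qed
  ultimately show ?thesis unfolding m_def K_def by simp
qed

end

lemma card_ham_cycle: "ham_cycle n H \<Longrightarrow> card H = n"
proof -
  assume "ham_cycle n H"
  then obtain f where "n \<ge> 3" "bij_betw f {0..<n} {0..<n}" "H = cycle_edges f n"
    unfolding ham_cycle_def by blast
  then interpret ham_enumeration n f by unfold_locales
  show "card H = n" using card_tour \<open>H = cycle_edges f n\<close> by simp
qed

context ham_enumeration
begin

lemma pmf_gen_steps_Suc_ge:
  assumes "B \<subseteq> tour" and "card B < n"
  shows "(\<Sum>e\<in>tour - B. pmf (weighted_choice (admissible n B) (edge_weight (PiH n tour))) e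
                         * pmf (gen_steps n (PiH n tour) m (insert e B)) tour)
           \<le> pmf (gen_steps n (PiH n tour) (Suc m) B) tour"
proof -
  define A where "A = admissible n B"
  define w where "w = edge_weight (PiH n tour)"
  let ?next = "\<lambda>e. gen_steps n (PiH n tour) m (insert e B)"
  have fin_A: "finite A" unfolding A_def by (rule finite_admissible)
  have tour_A: "tour - B \<subseteq> A" unfolding A_def using tour_minus_subset_admissible[OF assms(1)] .
  moreover have "B \<noteq> tour" using assms(2) card_tour by auto
  then have "tour - B \<noteq> {}" using assms(1) by auto
  ultimately have A_ne: "A \<noteq> {}" by blast
  have "\<not> ham_cycle n B" using assms(2) card_ham_cycle by fastforce
  then have step: "gen_steps n (PiH n tour) (Suc m) B = bind_pmf (weighted_choice A w) ?next"
    using A_ne unfolding A_def w_def by simp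
  have "set_pmf (weighted_choice A w) \<subseteq> A"
    using fin_A A_ne by (rule set_pmf_weighted_choice)
      (use n_ge_3 edge_weight_PiH_pos in \<open>auto simp: A_def w_def admissible_def\<close>)
  then have "pmf (gen_steps n (PiH n tour) (Suc m) B) tour
               = (\<Sum>e\<in>A. pmf (weighted_choice A w) e * pmf (?next e) tour)"
    unfolding step using fin_A by (rule pmf_bind_finite_support[rotated])
  moreover have "(\<Sum>e\<in>tour - B. pmf (weighted_choice A w) e * pmf (?next e) tour)
                   \<le> (\<Sum>e\<in>A. pmf (weighted_choice A w) e * pmf (?next e) tour)"
    using fin_A tour_A by (intro sum_mono2) auto
  ultimately show ?thesis unfolding A_def w_def by simp
qed

lemma pmf_gen_steps_tour:
  assumes "B \<subseteq> tour" and "card B + m = n"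
  shows "exp (- (2 * real m * (real m + 1) / ((real n - 1) * (real n - 2))))
           \<le> pmf (gen_steps n (PiH n tour) m B) tour"
  using assms
proof (induction m arbitrary: B)
  case 0
  then have "B = tour" using card_subset_eq[OF finite_tour] card_tour by simp
  then show ?case by simp
next
  case (Suc m)
  define K where "K = (real n - 1) * (real n - 2)"
  define Q where "Q = exp (- (2 * real m * (real m + 1) / K))"
  define r where "r = exp (- (4 * real (Suc m) / K)) / real (Suc m)"
  let ?choice = "weighted_choice (admissible n B) (edge_weight (PiH n tour))"
  let ?next = "\<lambda>e. gen_steps n (PiH n tour) m (insert e B)"
  have fin_B: "finite B" using finite_subset[OF Suc.prems(1) finite_tour] .
  have card_missing: "card (tour - B) = Suc m"
    using card_Diff_subset[OF fin_B Suc.prems(1)] card_tour Suc.prems(2) by simp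
  have IH: "Q \<le> pmf (?next e) tour" if "e \<in> tour - B" for e
    using that Suc.IH[of "insert e B"] Suc.prems fin_B unfolding Q_def K_def by auto
  have choose: "r \<le> pmf ?choice e" if "e \<in> tour - B" for e
    using pmf_choose_tour_edge[OF Suc.prems(1) that] card_missing unfolding r_def K_def by simp
  have "2 * real (Suc m) * (real (Suc m) + 1) = 2 * real m * (real m + 1) + 4 * real (Suc m)"
    by (simp add: algebra_simps)
  then have "2 * real (Suc m) * (real (Suc m) + 1) / K = 2 * real m * (real m + 1) / K + 4 * real (Suc m) / K"
    by (simp add: add_divide_distrib)
  then have "exp (- (2 * real (Suc m) * (real (Suc m) + 1) / K)) = real (Suc m) * (r * Q)"
    unfolding Q_def r_def by (simp add: exp_add[symmetric])
  also have "\<dots> = (\<Sum>e\<in>tour - B. r * Q)"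
    using card_missing by simp
  also have "\<dots> \<le> (\<Sum>e\<in>tour - B. pmf ?choice e * pmf (?next e) tour)"
    using choose IH by (intro sum_mono mult_mono) (auto simp: Q_def r_def)
  also have "\<dots> \<le> pmf (gen_steps n (PiH n tour) (Suc m) B) tour"
    using Suc.prems by (intro pmf_gen_steps_Suc_ge) auto
  finally show ?case unfolding K_def .
qed

end

lemma exponent_le_4:
  assumes "7 \<le> n"
  shows "2 * real n * (real n + 1) / ((real n - 1) * (real n - 2)) \<le> 4"
proof -
  have "0 \<le> real n * (real n - 7)" using assms by simp
  then have "2 * real n * (real n + 1) \<le> 4 * ((real n - 1) * (real n - 2))"
    by (simp add: algebra_simps)
  moreover have "0 < (real n - 1) * (real n - 2)" using assms by simp
  ultimately show ?thesis by (simp add: divide_le_eq)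
qed

theorem claim5:
  shows "\<exists>c>0. \<exists>N. \<forall>n\<ge>N. \<forall>(d :: nat set \<Rightarrow> real) H.
           (\<forall>e\<in>Kn_edges n. d e \<ge> 0) \<longrightarrow> ham_cycle n H \<longrightarrow>
           measure_pmf.prob (edge_gen n (PiH n H))
             {B. ham_cycle n B \<and> cost d B \<le> cost d H} \<ge> c"
proof (intro exI[of _ "exp (- 4)"] conjI exI[of _ 7] allI impI)
  show "(0::real) < exp (- 4)" by simp
next
  fix n :: nat and d :: "nat set \<Rightarrow> real" and H
  assume n: "7 \<le> n" and H: "ham_cycle n H"
  then obtain g where "n \<ge> 3" "bij_betw g {0..<n} {0..<n}" and H_eq: "H = cycle_edges g n"
    unfolding ham_cycle_def by blast
  then interpret ham_enumeration n g by unfold_locales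
  have "exp (- 4) \<le> exp (- (2 * real n * (real n + 1) / ((real n - 1) * (real n - 2))))"
    using exponent_le_4[OF n] by simp
  also have "\<dots> \<le> pmf (edge_gen n (PiH n H)) H"
    unfolding edge_gen_def H_eq by (rule pmf_gen_steps_tour) auto
  also have "\<dots> \<le> measure_pmf.prob (edge_gen n (PiH n H)) {B. ham_cycle n B \<and> cost d B \<le> cost d H}"
    unfolding measure_pmf_single[symmetric] using H by (intro measure_pmf.finite_measure_mono) auto
  finally show "exp (- 4) \<le> measure_pmf.prob (edge_gen n (PiH n H)) {B. ham_cycle n B \<and> cost d B \<le> cost d H}" .
qed

end
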